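(* In the disclosure game described in the context, an ordered partition $(\mathcal{A},\le_P)$ of $E$ is the equilibrium partition if and only if every $A\in\mathcal{A}$ is the largest lower contour set in $E\setminus\bigcup_{A'<_P A}A'$ that minimizes $\xi$; that is, $A$ solves $$\min_L \xi(L)\quad\text{s.t. } L \text{ is a lower contour set in } E\setminus\textstyle\bigcup_{A'<_PA}A',$$ and every $L$ solving this problem satisfies $L\subset A$.
   Context: Disclosure game. A state $\omega\in\{G,B\}$ is drawn with prior probability $\pi_0\in(0,1)$ on $G$. The evidence space $E$ is a finite or countably infinite set; $F_G,F_B$ are probability distributions on $E$ such that for every $e\in E$ at least one of $F_G(e),F_B(e)$ is strictly positive. The sender privately observes evidence $e$ drawn from $F_\omega$. A disclosure rule is a preorder $\precsim$ on $E$ (reflexive and transitive) satisfying: for every sequence $e_1\succsim e_2\succsim\cdots$ in $E$ there is $N\ge1$ with $e_N\precsim e_n$ for all $n\ge N$. The sender with evidence $e$ sends a message $m\in E$ with $m\precsim e$; the receiver takes an action $a\in\mathbb{R}$; for every $\mu\in[0,1]$ the receiver's expected-payoff maximization problem $\max_a \mu u_R(a,G)+(1-\mu)u_R(a,B)$ has a unique solution $\phi(\mu)$, with $\phi$ strictly increasing; the sender's payoff is $a$. For nonempty $A\subset E$ let $\nu(A)=\frac{F_G(A)\pi_0}{F_G(A)\pi_0+F_B(A)(1-\pi_0)}$ and $\xi(A)=\phi(\nu(A))$. For nonempty $A\subset E$, a nonempty $L\subset A$ is a lower contour set in $A$ if for all $e\in L$, $e'\in A$, $e'\precsim e$ implies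 $e'\in L$. An ordered partition of $E$ is a partition $\mathcal{A}$ of $E$ into nonempty sets with a total order $\le_P$ on $\mathcal{A}$ ($<_P$ its strict part). The equilibrium partition is the (unique, when it exists) ordered partition $(\mathcal{A},\le_P)$ of $E$ such that: (1) $A_1<_PA_2$ implies $\xi(A_1)<\xi(A_2)$; (2) for $A_1,A_2\in\mathcal{A}$, $e_1\in A_1$, $e_2\in A_2$, $e_1\precsim e_2$ implies $A_1\le_P A_2$; (3) for all $A\in\mathcal{A}$ and all lower contour sets $L$ in $A$, $\xi(L)\ge\xi(A)$. (Such a partition exists iff a truth-leaning equilibrium exists, and its cells are the level sets of the sender's equilibrium value function.) *)

theory Defs
  imports "HOL-Analysis.Analysis"
begin

datatype state = G | B

definition prob_of :: "('e \<Rightarrow> real) \<Rightarrow> 'e set \<Rightarrow> real" where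
  "prob_of f A = infsum f A"

definition nu :: "real \<Rightarrow> ('e \<Rightarrow> real) \<Rightarrow> ('e \<Rightarrow> real) \<Rightarrow> 'e set \<Rightarrow> real" where
  "nu \<pi>0 fG fB A = prob_of fG A * \<pi>0 / (prob_of fG A * \<pi>0 + prob_of fB A * (1 - \<pi>0))"

definition xi :: "(real \<Rightarrow> real) \<Rightarrow> real \<Rightarrow> ('e \<Rightarrow> real) \<Rightarrow> ('e \<Rightarrow> real) \<Rightarrow> 'e set \<Rightarrow> real" where
  "xi \<phi> \<pi>0 fG fB A = \<phi> (nu \<pi>0 fG fB A)"

text \<open>Disclosure rule: a preorder on E (rel x y means x \<precsim> y) with the
  descending-sequence condition.\<close>
definition disclosure_rule :: "'e set \<Rightarrow> ('e \<Rightarrow> 'e \<Rightarrow> bool) \<Rightarrow> bool" where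
  "disclosure_rule E rel \<longleftrightarrow>
     (\<forall>e\<in>E. rel e e) \<and>
     (\<forall>x\<in>E. \<forall>y\<in>E. \<forall>z\<in>E. rel x y \<longrightarrow> rel y z \<longrightarrow> rel x z) \<and>
     (\<forall>s::nat \<Rightarrow> 'e. (\<forall>n. s n \<in> E) \<and> (\<forall>n. rel (s (Suc n)) (s n)) \<longrightarrow>
        (\<exists>N. \<forall>n\<ge>N. rel (s N) (s n)))"

definition lower_contour :: "('e \<Rightarrow> 'e \<Rightarrow> bool) \<Rightarrow> 'e set \<Rightarrow> 'e set \<Rightarrow> bool" where
  "lower_contour rel A L \<longleftrightarrow> L \<noteq> {} \<and> L \<subseteq> A \<and>
     (\<forall>e\<in>L. \<forall>e'\<in>A. rel e' e \<longrightarrow> e' \<in> L)"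

definition ordered_partition :: "'e set \<Rightarrow> 'e set set \<Rightarrow> ('e set \<times> 'e set) set \<Rightarrow> bool" where
  "ordered_partition E P r \<longleftrightarrow>
     (\<forall>A\<in>P. A \<noteq> {}) \<and> \<Union>P = E \<and>
     (\<forall>A1\<in>P. \<forall>A2\<in>P. A1 \<noteq> A2 \<longrightarrow> A1 \<inter> A2 = {}) \<and>
     linear_order_on P r"

definition strictP :: "('e set \<times> 'e set) set \<Rightarrow> 'e set \<Rightarrow> 'e set \<Rightarrow> bool" where
  "strictP r A1 A2 \<longleftrightarrow> (A1, A2) \<in> r \<and> A1 \<noteq> A2"

definition equilibrium_partition ::
  "(real \<Rightarrow> real) \<Rightarrow> real \<Rightarrow> ('e \<Rightarrow> real) \<Rightarrow> ('e \<Rightarrow> real) \<Rightarrow> 'e set \<Rightarrow>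
   ('e \<Rightarrow> 'e \<Rightarrow> bool) \<Rightarrow> 'e set set \<Rightarrow> ('e set \<times> 'e set) set \<Rightarrow> bool" where
  "equilibrium_partition \<phi> \<pi>0 fG fB E rel P r \<longleftrightarrow>
     ordered_partition E P r \<and>
     (\<forall>A1\<in>P. \<forall>A2\<in>P. strictP r A1 A2 \<longrightarrow> xi \<phi> \<pi>0 fG fB A1 < xi \<phi> \<pi>0 fG fB A2) \<and>
     (\<forall>A1\<in>P. \<forall>A2\<in>P. \<forall>e1\<in>A1. \<forall>e2\<in>A2. rel e1 e2 \<longrightarrow> (A1, A2) \<in> r) \<and>
     (\<forall>A\<in>P. \<forall>L. lower_contour rel A L \<longrightarrow> xi \<phi> \<pi>0 fG fB L \<ge> xi \<phi> \<pi>0 fG fB A)"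

end

theory Submission
  imports Defs
begin

text \<open>
  Posteriors of unions are compared through the surplus
  \<open>\<pi>0 F_G(X) - t (\<pi>0 F_G(X) + (1 - \<pi>0) F_B(X))\<close>, which is countably additive and, on
  nonempty \<open>X\<close>, has the sign of \<open>\<nu>(X) - t\<close>: if every piece of \<open>X\<close> in a partition has posterior
  at least (at most) \<open>t\<close>, so does \<open>X\<close>.

  If the partition is the equilibrium partition, a lower contour set \<open>L\<close> of the residual
  \<open>E - \<Union>{A'. A' <\<^sub>P A}\<close> splits into lower contour sets \<open>L \<inter> D\<close> of cells \<open>D \<ge>\<^sub>P A\<close>, each
  with posterior at least \<open>\<nu>(D) \<ge> \<nu>(A)\<close>, strictly more when \<open>D \<noteq> A\<close>; hence \<open>A\<close> is the
  largest minimizer. Conversely, condition (2) holds because every cell is a lower contour set of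
  its residual, and (3) because lower contour sets of \<open>A\<close> are lower contour sets of its residual.
  For (1), when \<open>Y <\<^sub>P Z\<close> the union of the cells in \<open>[Y, Z]\<close> is a lower contour set of the
  residual of \<open>Y\<close> not contained in \<open>Y\<close>, so its posterior exceeds \<open>\<nu>(Y)\<close>. As there may be
  infinitely many cells below \<open>Z\<close>, these jumps are turned into \<open>\<nu>(Y) < \<nu>(Z)\<close> by comparing
  \<open>\<nu>(Z)\<close> with the supremum of \<open>\<nu>\<close> over the cells below \<open>Z\<close>.
\<close>

lemma has_sum_infsum_UN_disjoint:
  fixes f :: "'a \<Rightarrow> 'b::banach"
  assumes summable: "f summable_on (\<Union>i\<in>I. A i)" and disj: "disjoint_family_on A I"
  shows "((\<lambda>i. infsum f (A i)) has_sum infsum f (\<Union>i\<in>I. A i)) I"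
proof -
  have "(\<Union>i\<in>I. A i) = snd ` Sigma I A"
    by force
  moreover have "inj_on snd (Sigma I A)"
    using disj by (force simp: disjoint_family_on_def inj_on_def)
  ultimately have "((f \<circ> snd) has_sum infsum f (\<Union>i\<in>I. A i)) (Sigma I A)"
    using summable by (metis has_sum_infsum has_sum_reindex)
  then show ?thesis
  proof (rule has_sum_SigmaD)
    fix i assume "i \<in> I"
    then have "f summable_on A i"
      using summable summable_on_subset_banach by blast
    then show "((\<lambda>y. (f \<circ> snd) (i, y)) has_sum infsum f (A i)) (A i)"
      by simp
  qed
qed

lemma prob_of_mono:
  assumes "f summable_on Y" "\<And>e. e \<in> Y \<Longrightarrow> 0 \<le> f e" "X \<subseteq> Y"
  shows "prob_of f X \<le> prob_of f Y"
  unfolding prob_of_def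
  using assms by (intro infsum_mono_neutral summable_on_subset_banach[of f Y X]) auto

lemma prob_of_pos:
  assumes "f summable_on X" "\<And>e. e \<in> X \<Longrightarrow> 0 \<le> f e" "x \<in> X" "0 < f x"
  shows "0 < prob_of f X"
proof -
  have "prob_of f {x} \<le> prob_of f X"
    using assms by (intro prob_of_mono) auto
  then show ?thesis
    using assms(4) by (simp add: prob_of_def)
qed

lemma prob_of_Un_disjoint:
  fixes f :: "'e \<Rightarrow> real"
  assumes "f summable_on X" "f summable_on Y" "X \<inter> Y = {}"
  shows "prob_of f (X \<union> Y) = prob_of f X + prob_of f Y"
  unfolding prob_of_def using assms by (rule infsum_Un_disjoint)

lemma prob_of_has_sum_partition:
  fixes f :: "'e \<Rightarrow> real"
  assumes "f summable_on X" "disjoint \<D>" "X \<subseteq> \<Union>\<D>"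
  shows "((\<lambda>D. prob_of f (X \<inter> D)) has_sum prob_of f X) \<D>"
proof -
  have "X = (\<Union>D\<in>\<D>. X \<inter> D)"
    using assms(3) by blast
  moreover have "disjoint_family_on (\<lambda>D. X \<inter> D) \<D>"
    using assms(2) by (auto simp: disjoint_family_on_def disjoint_def)
  ultimately show ?thesis
    unfolding prob_of_def using assms(1) has_sum_infsum_UN_disjoint by metis
qed

lemma lower_contour_trans:
  "lower_contour rel R A \<Longrightarrow> lower_contour rel A L \<Longrightarrow> lower_contour rel R L"
  unfolding lower_contour_def by blast

lemma lower_contour_Int:
  "lower_contour rel R L \<Longrightarrow> D \<subseteq> R \<Longrightarrow> L \<inter> D \<noteq> {} \<Longrightarrow> lower_contour rel D (L \<inter> D)"
  unfolding lower_contour_def by blast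

locale disclosure_game =
  fixes E :: "'e set" and fG fB :: "'e \<Rightarrow> real" and \<pi>0 :: real and \<phi> :: "real \<Rightarrow> real"
  assumes prior: "0 < \<pi>0" "\<pi>0 < 1"
    and fG_nonneg: "\<And>e. e \<in> E \<Longrightarrow> 0 \<le> fG e" and fG_has_sum: "(fG has_sum 1) E"
    and fB_nonneg: "\<And>e. e \<in> E \<Longrightarrow> 0 \<le> fB e" and fB_has_sum: "(fB has_sum 1) E"
    and support: "\<And>e. e \<in> E \<Longrightarrow> 0 < fG e \<or> 0 < fB e"
    and phi_mono: "strict_mono_on {0..1} \<phi>"
begin

abbreviation \<nu> :: "'e set \<Rightarrow> real" where
  "\<nu> \<equiv> nu \<pi>0 fG fB"

abbreviation \<xi> :: "'e set \<Rightarrow> real" where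
  "\<xi> \<equiv> xi \<phi> \<pi>0 fG fB"

definition weight :: "'e set \<Rightarrow> real" where
  "weight X = prob_of fG X * \<pi>0 + prob_of fB X * (1 - \<pi>0)"

definition surplus :: "real \<Rightarrow> 'e set \<Rightarrow> real" where
  "surplus t X = prob_of fG X * \<pi>0 - t * weight X"

lemma summable_on_subset_E:
  assumes "X \<subseteq> E"
  shows "fG summable_on X" "fB summable_on X"
  using assms fG_has_sum fB_has_sum summable_on_subset_banach
  by (metis has_sum_imp_summable)+

lemma prob_of_bounds:
  assumes "X \<subseteq> E"
  shows "0 \<le> prob_of fG X" "prob_of fG X \<le> 1" "0 \<le> prob_of fB X" "prob_of fB X \<le> 1"
proof -
  show "0 \<le> prob_of fG X" "0 \<le> prob_of fB X"
    unfolding prob_of_def using assms fG_nonneg fB_nonneg by (auto intro!: infsum_nonneg)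
  have "prob_of fG E = 1" "prob_of fB E = 1"
    unfolding prob_of_def using fG_has_sum fB_has_sum by (auto intro: infsumI)
  then show "prob_of fG X \<le> 1" "prob_of fB X \<le> 1"
    using prob_of_mono[of fG E X] prob_of_mono[of fB E X] assms fG_nonneg fB_nonneg
      summable_on_subset_E[of E] by auto
qed

lemma weight_le_1:
  assumes "X \<subseteq> E"
  shows "weight X \<le> 1"
proof -
  have "prob_of fG X * \<pi>0 \<le> 1 * \<pi>0" "prob_of fB X * (1 - \<pi>0) \<le> 1 * (1 - \<pi>0)"
    using prob_of_bounds[OF assms] prior by (intro mult_right_mono; simp)+
  then show ?thesis
    unfolding weight_def by simp
qed

lemma weight_pos:
  assumes "X \<subseteq> E" "X \<noteq> {}"
  shows "0 < weight X"
proof -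
  obtain e where e: "e \<in> X"
    using assms(2) by blast
  have "0 < prob_of fG X \<or> 0 < prob_of fB X"
    using support[of e] e assms(1) summable_on_subset_E[OF assms(1)] fG_nonneg fB_nonneg
    by (metis prob_of_pos subsetD)
  then show ?thesis
    using prob_of_bounds[OF assms(1)] prior unfolding weight_def
    by (auto intro: add_pos_nonneg add_nonneg_pos)
qed

lemma nu_eq: "\<nu> X = prob_of fG X * \<pi>0 / weight X"
  unfolding nu_def weight_def ..

lemma nu_bounds:
  assumes "X \<subseteq> E" "X \<noteq> {}"
  shows "0 \<le> \<nu> X" "\<nu> X \<le> 1"
  using weight_pos[OF assms] prob_of_bounds[OF assms(1)] prior
  unfolding nu_eq weight_def by (simp_all add: divide_le_eq_1)

lemma xi_le_xi_iff:
  assumes "X \<subseteq> E" "X \<noteq> {}" "Y \<subseteq> E" "Y \<noteq> {}"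
  shows "\<xi> X \<le> \<xi> Y \<longleftrightarrow> \<nu> X \<le> \<nu> Y"
  unfolding xi_def using strict_mono_on_less_eq[OF phi_mono] nu_bounds assms by auto

lemma xi_less_xi_iff:
  assumes "X \<subseteq> E" "X \<noteq> {}" "Y \<subseteq> E" "Y \<noteq> {}"
  shows "\<xi> X < \<xi> Y \<longleftrightarrow> \<nu> X < \<nu> Y"
  unfolding xi_def using strict_mono_on_less[OF phi_mono] nu_bounds assms by auto

lemma surplus_empty [simp]: "surplus t {} = 0"
  unfolding surplus_def weight_def prob_of_def by simp

lemma surplus_Un_disjoint:
  assumes "X \<subseteq> E" "Y \<subseteq> E" "X \<inter> Y = {}"
  shows "surplus t (X \<union> Y) = surplus t X + surplus t Y"
  using prob_of_Un_disjoint[of fG X Y] prob_of_Un_disjoint[of fB X Y]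
    summable_on_subset_E[OF assms(1)] summable_on_subset_E[OF assms(2)] assms(3)
  unfolding surplus_def weight_def by (simp add: algebra_simps)

lemma surplus_eq_weight_mult:
  assumes "X \<subseteq> E" "X \<noteq> {}"
  shows "surplus t X = weight X * (\<nu> X - t)"
  using weight_pos[OF assms] unfolding surplus_def nu_eq by (simp add: field_simps)

lemma surplus_sign:
  assumes "X \<subseteq> E" "X \<noteq> {}"
  shows surplus_nonneg_iff: "0 \<le> surplus t X \<longleftrightarrow> t \<le> \<nu> X"
    and surplus_nonpos_iff: "surplus t X \<le> 0 \<longleftrightarrow> \<nu> X \<le> t"
    and surplus_pos_iff: "0 < surplus t X \<longleftrightarrow> t < \<nu> X"
  using surplus_eq_weight_mult[OF assms] weight_pos[OF assms]
  by (simp_all add: zero_le_mult_iff mult_le_0_iff zero_less_mult_iff)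

lemma surplus_has_sum_partition:
  assumes "X \<subseteq> E" "disjoint \<D>" "X \<subseteq> \<Union>\<D>"
  shows "((\<lambda>D. surplus t (X \<inter> D)) has_sum surplus t X) \<D>"
proof -
  have "((\<lambda>D. ((1 - t) * \<pi>0) * prob_of fG (X \<inter> D) + (- t * (1 - \<pi>0)) * prob_of fB (X \<inter> D))
      has_sum (((1 - t) * \<pi>0) * prob_of fG X + (- t * (1 - \<pi>0)) * prob_of fB X)) \<D>"
    using assms summable_on_subset_E[OF assms(1)]
    by (intro has_sum_add has_sum_cmult_right prob_of_has_sum_partition)
  moreover have "surplus t Y = ((1 - t) * \<pi>0) * prob_of fG Y + (- t * (1 - \<pi>0)) * prob_of fB Y" for Y
    unfolding surplus_def weight_def by (simp add: algebra_simps)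
  ultimately show ?thesis
    by simp
qed

lemma surplus_nonneg_if_pieces_ge:
  assumes "X \<subseteq> E" "disjoint \<D>" "X \<subseteq> \<Union>\<D>"
    and pieces: "\<And>D. D \<in> \<D> \<Longrightarrow> X \<inter> D \<noteq> {} \<Longrightarrow> t \<le> \<nu> (X \<inter> D)"
  shows "0 \<le> surplus t X"
proof (rule has_sum_nonneg[OF surplus_has_sum_partition[OF assms(1-3)]])
  fix D assume "D \<in> \<D>"
  then show "0 \<le> surplus t (X \<inter> D)"
    using pieces surplus_nonneg_iff[of "X \<inter> D"] assms(1) by (cases "X \<inter> D = {}") auto
qed

lemma surplus_pos_if_pieces_ge:
  assumes "X \<subseteq> E" "disjoint \<D>" "X \<subseteq> \<Union>\<D>"
    and pieces: "\<And>D. D \<in> \<D> \<Longrightarrow> X \<inter> D \<noteq> {} \<Longrightarrow> t \<le> \<nu> (X \<inter> D)"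
    and "D0 \<in> \<D>" "X \<inter> D0 \<noteq> {}" "t < \<nu> (X \<inter> D0)"
  shows "0 < surplus t X"
proof (rule has_sum_strict_mono[OF has_sum_0 surplus_has_sum_partition[OF assms(1-3)]])
  fix D assume "D \<in> \<D>"
  then show "0 \<le> surplus t (X \<inter> D)"
    using pieces surplus_nonneg_iff[of "X \<inter> D"] assms(1) by (cases "X \<inter> D = {}") auto
next
  show "D0 \<in> \<D>" "0 < surplus t (X \<inter> D0)"
    using assms(1,5-) surplus_pos_iff[of "X \<inter> D0"] by auto
qed simp

lemma surplus_nonpos_if_pieces_le:
  assumes "X \<subseteq> E" "disjoint \<D>" "X \<subseteq> \<Union>\<D>"
    and pieces: "\<And>D. D \<in> \<D> \<Longrightarrow> X \<inter> D \<noteq> {} \<Longrightarrow> \<nu> (X \<inter> D) \<le> t"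
  shows "surplus t X \<le> 0"
proof (rule has_sum_mono[OF surplus_has_sum_partition[OF assms(1-3)] has_sum_0])
  fix D assume "D \<in> \<D>"
  then show "surplus t (X \<inter> D) \<le> 0"
    using pieces surplus_nonpos_iff[of "X \<inter> D"] assms(1) by (cases "X \<inter> D = {}") auto
qed simp

lemma nu_Un_le:
  assumes "X \<subseteq> E" "Z \<subseteq> E" "X \<inter> Z = {}" "Z \<noteq> {}" "surplus s X \<le> 0" "\<nu> Z \<le> s"
  shows "\<nu> (X \<union> Z) \<le> s - weight Z * (s - \<nu> Z)"
proof -
  have U: "X \<union> Z \<subseteq> E" "X \<union> Z \<noteq> {}"
    using assms(1,2,4) by auto
  have "weight (X \<union> Z) * (\<nu> (X \<union> Z) - s) = surplus s X + surplus s Z"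
    using surplus_eq_weight_mult[OF U] surplus_Un_disjoint[OF assms(1-3)] by simp
  also have "\<dots> \<le> weight Z * (\<nu> Z - s)"
    using assms(5) surplus_eq_weight_mult[OF assms(2,4)] by simp
  finally have bound: "weight (X \<union> Z) * (\<nu> (X \<union> Z) - s) \<le> weight Z * (\<nu> Z - s)" .
  moreover have "weight Z * (\<nu> Z - s) \<le> 0"
    using weight_pos[OF assms(2,4)] assms(6) by (simp add: mult_nonneg_nonpos)
  ultimately have "weight (X \<union> Z) * (\<nu> (X \<union> Z) - s) \<le> 0"
    by linarith
  then have "\<nu> (X \<union> Z) - s \<le> 0"
    using weight_pos[OF U] by (auto simp: mult_le_0_iff)
  then have "(1 - weight (X \<union> Z)) * (\<nu> (X \<union> Z) - s) \<le> 0"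
    using weight_le_1[OF U(1)] by (simp add: mult_nonneg_nonpos)
  then have "\<nu> (X \<union> Z) - s \<le> weight (X \<union> Z) * (\<nu> (X \<union> Z) - s)"
    by (simp add: algebra_simps)
  then show ?thesis
    using bound by (simp add: algebra_simps)
qed

end

locale ordered_cells = disclosure_game E fG fB \<pi>0 \<phi>
  for E :: "'e set" and fG fB \<pi>0 \<phi> +
  fixes rel :: "'e \<Rightarrow> 'e \<Rightarrow> bool" and P :: "'e set set" and r :: "('e set \<times> 'e set) set"
  assumes partition: "ordered_partition E P r"
begin

lemma cell_subset: "D \<in> P \<Longrightarrow> D \<subseteq> E"
  and cell_nonempty: "D \<in> P \<Longrightarrow> D \<noteq> {}"
  and Union_cells: "\<Union>P = E"
  and disjoint_cells: "disjoint P"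
  using partition unfolding ordered_partition_def disjoint_def disjnt_def by (auto simp: pairwise_def)

lemma cell_eqI: "D1 \<in> P \<Longrightarrow> D2 \<in> P \<Longrightarrow> e \<in> D1 \<Longrightarrow> e \<in> D2 \<Longrightarrow> D1 = D2"
  using disjoint_cells unfolding disjoint_def disjnt_def pairwise_def by blast

lemma linear_cell_order: "linear_order_on P r"
  using partition unfolding ordered_partition_def by blast

lemma cell_order_refl: "D \<in> P \<Longrightarrow> (D, D) \<in> r"
  using linear_cell_order
  by (auto simp: linear_order_on_def partial_order_on_def preorder_on_def refl_on_def)

lemma cell_order_trans: "(C1, C2) \<in> r \<Longrightarrow> (C2, C3) \<in> r \<Longrightarrow> (C1, C3) \<in> r"
  using linear_cell_order
  by (auto simp: linear_order_on_def partial_order_on_def preorder_on_def elim: transE)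

lemma cell_order_antisym: "(C1, C2) \<in> r \<Longrightarrow> (C2, C1) \<in> r \<Longrightarrow> C1 = C2"
  using linear_cell_order
  by (auto simp: linear_order_on_def partial_order_on_def dest: antisymD)

lemma cell_order_total: "C1 \<in> P \<Longrightarrow> C2 \<in> P \<Longrightarrow> (C1, C2) \<in> r \<or> (C2, C1) \<in> r"
  using linear_cell_order cell_order_refl
  by (cases "C1 = C2") (auto simp: linear_order_on_def total_on_def)

definition residual :: "'e set \<Rightarrow> 'e set" where
  "residual A = E - \<Union>{A' \<in> P. strictP r A' A}"

definition segment :: "'e set \<Rightarrow> 'e set \<Rightarrow> 'e set" where
  "segment Y Z = \<Union>{D \<in> P. (Y, D) \<in> r \<and> (D, Z) \<in> r}"

definition monotone_cells :: bool where
  "monotone_cells \<longleftrightarrow> (\<forall>A1\<in>P. \<forall>A2\<in>P. \<forall>e1\<in>A1. \<forall>e2\<in>A2. rel e1 e2 \<longrightarrow> (A1, A2) \<in> r)"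

lemma residual_subset: "residual A \<subseteq> E"
  unfolding residual_def by blast

lemma mem_residual_iff:
  assumes "A \<in> P"
  shows "e \<in> residual A \<longleftrightarrow> (\<exists>D\<in>P. e \<in> D \<and> (A, D) \<in> r)"
proof
  assume e: "e \<in> residual A"
  then obtain D where D: "D \<in> P" "e \<in> D"
    using Union_cells residual_subset by blast
  then have "\<not> strictP r D A"
    using e unfolding residual_def by blast
  then have "(A, D) \<in> r"
    using cell_order_total[OF assms D(1)] cell_order_refl[OF assms] unfolding strictP_def by auto
  then show "\<exists>D\<in>P. e \<in> D \<and> (A, D) \<in> r"
    using D by blast
next
  assume "\<exists>D\<in>P. e \<in> D \<and> (A, D) \<in> r"
  then obtain D where D: "D \<in> P" "e \<in> D" "(A, D) \<in> r"
    by blast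
  have "D' = D" if "D' \<in> P" "e \<in> D'" for D'
    using cell_eqI that D by blast
  then have "e \<notin> \<Union>{A' \<in> P. strictP r A' A}"
    using D(3) cell_order_antisym unfolding strictP_def by blast
  with D(1,2) show "e \<in> residual A"
    using cell_subset unfolding residual_def by blast
qed

lemma cell_subset_residual: "A \<in> P \<Longrightarrow> D \<in> P \<Longrightarrow> (A, D) \<in> r \<Longrightarrow> D \<subseteq> residual A"
  using mem_residual_iff by blast

lemma segment_subset_residual: "Y \<in> P \<Longrightarrow> segment Y Z \<subseteq> residual Y"
  unfolding segment_def using cell_subset_residual by blast

lemma cell_subset_segment: "D \<in> P \<Longrightarrow> (Y, D) \<in> r \<Longrightarrow> (D, Z) \<in> r \<Longrightarrow> D \<subseteq> segment Y Z"
  unfolding segment_def by blast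

lemma end_subset_segment: "Z \<in> P \<Longrightarrow> (Y, Z) \<in> r \<Longrightarrow> Z \<subseteq> segment Y Z"
  using cell_subset_segment cell_order_refl by blast

lemma segment_Int_cell:
  assumes "D \<in> P" "segment Y Z \<inter> D \<noteq> {}"
  shows "(Y, D) \<in> r" "(D, Z) \<in> r" "segment Y Z \<inter> D = D"
proof -
  obtain D' e where "D' \<in> P" "(Y, D') \<in> r" "(D', Z) \<in> r" "e \<in> D'" "e \<in> D"
    using assms(2) unfolding segment_def by blast
  then have "D' = D" and "(Y, D) \<in> r" "(D, Z) \<in> r"
    using cell_eqI[OF _ assms(1)] by blast+
  then show "(Y, D) \<in> r" "(D, Z) \<in> r" "segment Y Z \<inter> D = D"
    using cell_subset_segment[OF assms(1)] by blast+
qed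

lemma monotone_cells_iff_lower_contour_residual:
  "monotone_cells \<longleftrightarrow> (\<forall>A\<in>P. lower_contour rel (residual A) A)"
proof
  assume mono: monotone_cells
  show "\<forall>A\<in>P. lower_contour rel (residual A) A"
  proof
    fix A assume A: "A \<in> P"
    have "e' \<in> A" if e: "e \<in> A" "e' \<in> residual A" "rel e' e" for e e'
    proof -
      obtain D where "D \<in> P" "e' \<in> D" "(A, D) \<in> r"
        using mem_residual_iff[OF A] e(2) by blast
      moreover have "(D, A) \<in> r"
        using mono A calculation e unfolding monotone_cells_def by blast
      ultimately show ?thesis
        using cell_order_antisym by blast
    qed
    then show "lower_contour rel (residual A) A"
      unfolding lower_contour_def
      using cell_nonempty[OF A] cell_subset_residual[OF A A cell_order_refl[OF A]] by blast
  qed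
next
  assume lc: "\<forall>A\<in>P. lower_contour rel (residual A) A"
  show monotone_cells
    unfolding monotone_cells_def
  proof (intro ballI impI)
    fix A1 A2 e1 e2 assume A: "A1 \<in> P" "A2 \<in> P" and e: "e1 \<in> A1" "e2 \<in> A2" "rel e1 e2"
    show "(A1, A2) \<in> r"
    proof (rule ccontr)
      assume "(A1, A2) \<notin> r"
      then have "(A2, A1) \<in> r" "A1 \<noteq> A2"
        using cell_order_total[OF A] cell_order_refl[OF A(1)] by auto
      moreover have "lower_contour rel (residual A2) A2"
        using lc A(2) by blast
      ultimately have "e1 \<in> A2"
        using e cell_subset_residual[OF A(2,1)] unfolding lower_contour_def by blast
      then show False
        using cell_eqI[OF A e(1)] \<open>A1 \<noteq> A2\<close> by blast
    qed
  qed
qed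

lemma segment_lower_contour:
  assumes monotone_cells "Y \<in> P" "Z \<in> P" "(Y, Z) \<in> r"
  shows "lower_contour rel (residual Y) (segment Y Z)"
  unfolding lower_contour_def
proof (intro conjI ballI impI)
  show "segment Y Z \<noteq> {}"
    using end_subset_segment[OF assms(3,4)] cell_nonempty[OF assms(3)] by blast
  show "segment Y Z \<subseteq> residual Y"
    using segment_subset_residual[OF assms(2)] .
  fix e e' assume e: "e \<in> segment Y Z" "e' \<in> residual Y" "rel e' e"
  obtain D where D: "D \<in> P" "e \<in> D" "(D, Z) \<in> r"
    using e(1) unfolding segment_def by blast
  obtain D' where D': "D' \<in> P" "e' \<in> D'" "(Y, D') \<in> r"
    using mem_residual_iff[OF assms(2)] e(2) by blast
  have "(D', D) \<in> r"
    using assms(1) D D' e(3) unfolding monotone_cells_def by blast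
  then have "(D', Z) \<in> r"
    using D(3) by (rule cell_order_trans)
  then show "e' \<in> segment Y Z"
    using cell_subset_segment[OF D'(1,3)] D'(2) by blast
qed

lemma lower_contour_residual_Int_cell:
  assumes "A \<in> P" "lower_contour rel (residual A) L" "D \<in> P" "L \<inter> D \<noteq> {}"
  shows "(A, D) \<in> r" "lower_contour rel D (L \<inter> D)"
proof -
  obtain e where "e \<in> L" "e \<in> D"
    using assms(4) by blast
  then obtain D' where "D' \<in> P" "e \<in> D'" "(A, D') \<in> r"
    using assms(2) mem_residual_iff[OF assms(1)] unfolding lower_contour_def by blast
  then show AD: "(A, D) \<in> r"
    using cell_eqI[OF _ assms(3)] \<open>e \<in> D\<close> by blast
  show "lower_contour rel D (L \<inter> D)"
    using lower_contour_Int[OF assms(2) cell_subset_residual[OF assms(1,3) AD] assms(4)] .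
qed

definition xi_minimizer :: "'e set \<Rightarrow> 'e set \<Rightarrow> bool" where
  "xi_minimizer R L \<longleftrightarrow> lower_contour rel R L \<and> (\<forall>L'. lower_contour rel R L' \<longrightarrow> \<xi> L \<le> \<xi> L')"

definition largest_xi_minimizer :: "'e set \<Rightarrow> 'e set \<Rightarrow> bool" where
  "largest_xi_minimizer R A \<longleftrightarrow> xi_minimizer R A \<and> (\<forall>L. xi_minimizer R L \<longrightarrow> L \<subseteq> A)"

lemma lower_contour_residual_subset:
  "lower_contour rel (residual A) L \<Longrightarrow> L \<subseteq> E \<and> L \<noteq> {}"
  using residual_subset unfolding lower_contour_def by blast

lemma equilibrium_partition_iff:
  "equilibrium_partition \<phi> \<pi>0 fG fB E rel P r \<longleftrightarrow>
     (\<forall>A1\<in>P. \<forall>A2\<in>P. strictP r A1 A2 \<longrightarrow> \<nu> A1 < \<nu> A2) \<and> monotone_cells \<and>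
     (\<forall>A\<in>P. \<forall>L. lower_contour rel A L \<longrightarrow> \<nu> A \<le> \<nu> L)"
proof -
  have xi_cells: "\<xi> A1 < \<xi> A2 \<longleftrightarrow> \<nu> A1 < \<nu> A2" if "A1 \<in> P" "A2 \<in> P" for A1 A2
    using that cell_subset cell_nonempty by (intro xi_less_xi_iff) auto
  have xi_contour: "\<xi> A \<le> \<xi> L \<longleftrightarrow> \<nu> A \<le> \<nu> L" if "A \<in> P" "lower_contour rel A L" for A L
    using that cell_subset cell_nonempty unfolding lower_contour_def by (intro xi_le_xi_iff) auto
  show ?thesis
    unfolding equilibrium_partition_def monotone_cells_def
    using partition xi_cells xi_contour by auto
qed

lemma largest_xi_minimizer_if_equilibrium:
  assumes increasing: "\<And>A1 A2. A1 \<in> P \<Longrightarrow> A2 \<in> P \<Longrightarrow> strictP r A1 A2 \<Longrightarrow> \<nu> A1 < \<nu> A2"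
    and mono: monotone_cells
    and cell_min: "\<And>A L. A \<in> P \<Longrightarrow> lower_contour rel A L \<Longrightarrow> \<nu> A \<le> \<nu> L"
    and A: "A \<in> P"
  shows "largest_xi_minimizer (residual A) A"
proof -
  have piece: "\<nu> A \<le> \<nu> (L \<inter> D) \<and> (D \<noteq> A \<longrightarrow> \<nu> A < \<nu> (L \<inter> D))"
    if L: "lower_contour rel (residual A) L" and D: "D \<in> P" "L \<inter> D \<noteq> {}" for L D
  proof -
    have "(A, D) \<in> r" "\<nu> D \<le> \<nu> (L \<inter> D)"
      using lower_contour_residual_Int_cell[OF A L D] cell_min D(1) by auto
    then show ?thesis
      using increasing[OF A D(1)] unfolding strictP_def by force
  qed
  have below: "\<nu> A \<le> \<nu> L" if L: "lower_contour rel (residual A) L" for L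
    using surplus_nonneg_if_pieces_ge[OF _ disjoint_cells, of L "\<nu> A"] piece[OF L] Union_cells
      surplus_nonneg_iff lower_contour_residual_subset[OF L] by blast
  have strictly_below: "\<nu> A < \<nu> L" if L: "lower_contour rel (residual A) L" and "\<not> L \<subseteq> A" for L
  proof -
    obtain e where e: "e \<in> L" "e \<notin> A"
      using \<open>\<not> L \<subseteq> A\<close> by blast
    then obtain D where D: "D \<in> P" "e \<in> D"
      using Union_cells lower_contour_residual_subset[OF L] by blast
    have "0 < surplus (\<nu> A) L"
      using surplus_pos_if_pieces_ge[OF _ disjoint_cells _ _ D(1)] piece[OF L] piece[OF L D(1)]
        lower_contour_residual_subset[OF L] Union_cells D e by blast
    then show ?thesis
      using surplus_pos_iff lower_contour_residual_subset[OF L] by blast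
  qed
  have A_contour: "lower_contour rel (residual A) A"
    using mono A monotone_cells_iff_lower_contour_residual by blast
  have xi_iff: "\<xi> L1 \<le> \<xi> L2 \<longleftrightarrow> \<nu> L1 \<le> \<nu> L2"
    if "lower_contour rel (residual A) L1" "lower_contour rel (residual A) L2" for L1 L2
    using xi_le_xi_iff lower_contour_residual_subset that by blast
  show ?thesis
    unfolding largest_xi_minimizer_def xi_minimizer_def
    using A_contour below strictly_below xi_iff by (meson not_le)
qed

lemma nu_less_segment:
  assumes mono: monotone_cells and largest: "largest_xi_minimizer (residual Y) Y"
    and YZ: "Y \<in> P" "Z \<in> P" "strictP r Y Z"
  shows "\<nu> Y < \<nu> (segment Y Z)"
proof -
  have seg: "lower_contour rel (residual Y) (segment Y Z)"
    using segment_lower_contour[OF mono YZ(1,2)] YZ(3) unfolding strictP_def by blast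
  have "Z \<subseteq> segment Y Z"
    using end_subset_segment[OF YZ(2)] YZ(3) unfolding strictP_def by blast
  then have "\<not> segment Y Z \<subseteq> Y"
    using cell_nonempty[OF YZ(2)] cell_eqI[OF YZ(1,2)] YZ(3) unfolding strictP_def by blast
  then obtain L where L: "lower_contour rel (residual Y) L" "\<xi> L < \<xi> (segment Y Z)"
    using largest seg unfolding largest_xi_minimizer_def xi_minimizer_def by force
  moreover have "\<xi> Y \<le> \<xi> L"
    using largest L(1) unfolding largest_xi_minimizer_def xi_minimizer_def by blast
  ultimately have "\<xi> Y < \<xi> (segment Y Z)"
    by linarith
  then show ?thesis
    using xi_less_xi_iff cell_subset[OF YZ(1)] cell_nonempty[OF YZ(1)]
      lower_contour_residual_subset[OF seg] by blast
qed

lemma nu_le_if_segment_gaps: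
  assumes gap: "\<And>Y. Y \<in> P \<Longrightarrow> strictP r Y Z \<Longrightarrow> \<nu> Y < \<nu> (segment Y Z)"
    and Z: "Z \<in> P" and D: "D \<in> P" "strictP r D Z"
  shows "\<nu> D \<le> \<nu> Z"
proof (rule ccontr)
  assume "\<not> \<nu> D \<le> \<nu> Z"
  define S where "S = {C \<in> P. strictP r C Z}"
  define s where "s = Sup (\<nu> ` S)"
  have bdd: "bdd_above (\<nu> ` S)"
    using nu_bounds(2) cell_subset cell_nonempty unfolding S_def by (auto intro!: bdd_aboveI[of _ 1])
  have below_s: "\<nu> C \<le> s" if "C \<in> S" for C
    unfolding s_def using bdd that by (auto intro: cSup_upper)
  have "\<nu> Z < s"
    using below_s[of D] D \<open>\<not> \<nu> D \<le> \<nu> Z\<close> unfolding S_def by force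
  \<comment> \<open>Cells of \<open>segment C Z\<close> other than \<open>Z\<close> have posterior at most \<open>s\<close>, so \<open>Z\<close> pulls the
    posterior of the segment down to \<open>s - \<delta>\<close>, below \<open>\<nu> C\<close> if \<open>C\<close> nearly attains \<open>s\<close>.\<close>
  define \<delta> where "\<delta> = weight Z * (s - \<nu> Z)"
  have "0 < \<delta>"
    unfolding \<delta>_def using weight_pos[OF cell_subset[OF Z] cell_nonempty[OF Z]] \<open>\<nu> Z < s\<close> by simp
  then obtain C where C: "C \<in> S" "s - \<delta> < \<nu> C"
    using less_cSup_iff[OF _ bdd, of "s - \<delta>"] D unfolding s_def S_def by force
  then have CZ: "C \<in> P" "strictP r C Z" "(C, Z) \<in> r"
    unfolding S_def strictP_def by auto
  define V where "V = segment C Z - Z"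
  have seg: "segment C Z = V \<union> Z"
    using end_subset_segment[OF Z CZ(3)] unfolding V_def by blast
  have V: "V \<subseteq> E" "V \<subseteq> \<Union>P" "V \<inter> Z = {}"
    using segment_subset_residual[OF CZ(1)] residual_subset Union_cells unfolding V_def by blast+
  have "surplus s V \<le> 0"
  proof (rule surplus_nonpos_if_pieces_le[OF V(1) disjoint_cells V(2)])
    fix C' assume C': "C' \<in> P" "V \<inter> C' \<noteq> {}"
    then have "segment C Z \<inter> C' \<noteq> {}" "C' \<noteq> Z"
      unfolding V_def by blast+
    then have "(C', Z) \<in> r" "V \<inter> C' = C'"
      using segment_Int_cell[OF C'(1)] cell_eqI[OF C'(1) Z] unfolding V_def by blast+
    then show "\<nu> (V \<inter> C') \<le> s"
      using below_s[of C'] C'(1) \<open>C' \<noteq> Z\<close> unfolding S_def strictP_def by simp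
  qed
  then have "\<nu> (segment C Z) \<le> s - \<delta>"
    unfolding seg \<delta>_def
    using nu_Un_le[OF V(1) cell_subset[OF Z] V(3) cell_nonempty[OF Z]] \<open>\<nu> Z < s\<close> by simp
  then show False
    using gap[OF CZ(1,2)] C(2) by linarith
qed

lemma nu_less_if_segment_gaps:
  assumes gap: "\<And>Y. Y \<in> P \<Longrightarrow> strictP r Y Z \<Longrightarrow> \<nu> Y < \<nu> (segment Y Z)"
    and YZ: "Y \<in> P" "Z \<in> P" "strictP r Y Z"
  shows "\<nu> Y < \<nu> Z"
proof (rule ccontr)
  assume "\<not> \<nu> Y < \<nu> Z"
  have seg: "segment Y Z \<subseteq> E" "segment Y Z \<subseteq> \<Union>P" "segment Y Z \<noteq> {}"
    using segment_subset_residual[OF YZ(1)] residual_subset Union_cells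
      end_subset_segment[OF YZ(2)] cell_nonempty[OF YZ(2)] YZ(3)
    unfolding strictP_def by blast+
  have "surplus (\<nu> Y) (segment Y Z) \<le> 0"
  proof (rule surplus_nonpos_if_pieces_le[OF seg(1) disjoint_cells seg(2)])
    fix D assume D: "D \<in> P" "segment Y Z \<inter> D \<noteq> {}"
    then have "\<nu> D \<le> \<nu> Z"
      using nu_le_if_segment_gaps[OF gap YZ(2) D(1)] segment_Int_cell(2)[OF D] unfolding strictP_def
      by (cases "D = Z") auto
    then show "\<nu> (segment Y Z \<inter> D) \<le> \<nu> Y"
      using segment_Int_cell(3)[OF D] \<open>\<not> \<nu> Y < \<nu> Z\<close> by simp
  qed
  then have "\<nu> (segment Y Z) \<le> \<nu> Y"
    using surplus_nonpos_iff[OF seg(1,3)] by blast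
  then show False
    using gap[OF YZ(1,3)] by simp
qed

lemma equilibrium_partition_iff_largest_xi_minimizers:
  "equilibrium_partition \<phi> \<pi>0 fG fB E rel P r \<longleftrightarrow> (\<forall>A\<in>P. largest_xi_minimizer (residual A) A)"
proof
  assume "equilibrium_partition \<phi> \<pi>0 fG fB E rel P r"
  then show "\<forall>A\<in>P. largest_xi_minimizer (residual A) A"
    using largest_xi_minimizer_if_equilibrium unfolding equilibrium_partition_iff by blast
next
  assume largest: "\<forall>A\<in>P. largest_xi_minimizer (residual A) A"
  then have contour: "\<forall>A\<in>P. lower_contour rel (residual A) A"
    unfolding largest_xi_minimizer_def xi_minimizer_def by blast
  then have mono: monotone_cells
    using monotone_cells_iff_lower_contour_residual by blast
  have "\<nu> A1 < \<nu> A2" if "A1 \<in> P" "A2 \<in> P" "strictP r A1 A2" for A1 A2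
    using nu_less_if_segment_gaps[OF nu_less_segment[OF mono]] largest that by blast
  moreover have "\<nu> A \<le> \<nu> L" if A: "A \<in> P" and L: "lower_contour rel A L" for A L
  proof -
    have "lower_contour rel (residual A) L"
      using lower_contour_trans contour A L by blast
    then have "\<xi> A \<le> \<xi> L"
      using largest A unfolding largest_xi_minimizer_def xi_minimizer_def by blast
    then show ?thesis
      using xi_le_xi_iff cell_subset[OF A] cell_nonempty[OF A] L unfolding lower_contour_def by blast
  qed
  ultimately show "equilibrium_partition \<phi> \<pi>0 fG fB E rel P r"
    unfolding equilibrium_partition_iff using mono by blast
qed

end

theorem theorem3:
  fixes E :: "'e set" and fG fB :: "'e \<Rightarrow> real" and \<pi>0 :: real
    and uR :: "real \<Rightarrow> state \<Rightarrow> real" and \<phi> :: "real \<Rightarrow> real"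
    and rel :: "'e \<Rightarrow> 'e \<Rightarrow> bool"
    and P :: "'e set set" and r :: "('e set \<times> 'e set) set"
  assumes prior: "0 < \<pi>0" "\<pi>0 < 1"
    and E_countable: "countable E"
    and fG_dist: "\<forall>e\<in>E. fG e \<ge> 0" "(fG has_sum 1) E"
    and fB_dist: "\<forall>e\<in>E. fB e \<ge> 0" "(fB has_sum 1) E"
    and support: "\<forall>e\<in>E. fG e > 0 \<or> fB e > 0"
    and rule: "disclosure_rule E rel"
    and receiver: "\<forall>\<mu>\<in>{0..1}. \<forall>a.
        (\<forall>a'. \<mu> * uR a' G + (1 - \<mu>) * uR a' B \<le> \<mu> * uR a G + (1 - \<mu>) * uR a B)
        \<longleftrightarrow> a = \<phi> \<mu>"
    and phi_mono: "strict_mono_on {0..1} \<phi>"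
    and op: "ordered_partition E P r"
  shows "equilibrium_partition \<phi> \<pi>0 fG fB E rel P r \<longleftrightarrow>
    (\<forall>A\<in>P.
       let R = E - \<Union>{A'\<in>P. strictP r A' A} in
         lower_contour rel R A \<and>
         (\<forall>L. lower_contour rel R L \<longrightarrow> xi \<phi> \<pi>0 fG fB A \<le> xi \<phi> \<pi>0 fG fB L) \<and>
         (\<forall>L. lower_contour rel R L \<and>
              (\<forall>L'. lower_contour rel R L' \<longrightarrow> xi \<phi> \<pi>0 fG fB L \<le> xi \<phi> \<pi>0 fG fB L')
              \<longrightarrow> L \<subseteq> A))"
proof -
  interpret ordered_cells E fG fB \<pi>0 \<phi> rel P r
    using prior fG_dist fB_dist support phi_mono op by unfold_locales auto
  show ?thesis
    unfolding equilibrium_partition_iff_largest_xi_minimizers largest_xi_minimizer_def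
      xi_minimizer_def residual_def Let_def
    by blast
qed

end
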